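(* Let $P\subset\mathbb{R}^d$ be a finite set, let $r$ be the radius of the minimum enclosing ball of $P$, and let $M$ be a maximum-weight matching of $P$ (i.e. a matching attaining $\operatorname{opt}_{\mathrm{max\text{-}match}}(P)$). Then there exists a ball of radius $r/2$ that contains both endpoints $p,q$ of every pair $\{p,q\}\in M$ with $\|p-q\|\le r/4$.
   Context: Norms are Euclidean. A matching of $P$ is a matching in the complete graph on $P$, with weight $\sum_{\{p,q\}\in M}\|p-q\|$; $\operatorname{opt}_{\mathrm{max\text{-}match}}(P)$ is the maximum weight over all matchings of $P$. *)

theory Defs
  imports "HOL-Analysis.Analysis"
begin

definition is_matching :: "'a set \<Rightarrow> 'a set set \<Rightarrow> bool" where
  "is_matching P M \<longleftrightarrow>
     (\<forall>e\<in>M. e \<subseteq> P \<and> card e = 2) \<and>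
     (\<forall>e\<in>M. \<forall>e'\<in>M. e \<noteq> e' \<longrightarrow> e \<inter> e' = {})"

definition matching_weight :: "'a::real_normed_vector set set \<Rightarrow> real" where
  "matching_weight M = (\<Sum>e\<in>M. (THE w. \<exists>p q. e = {p, q} \<and> w = norm (p - q)))"

definition is_max_matching :: "'a::real_normed_vector set \<Rightarrow> 'a set set \<Rightarrow> bool" where
  "is_max_matching P M \<longleftrightarrow> is_matching P M \<and>
     (\<forall>M'. is_matching P M' \<longrightarrow> matching_weight M' \<le> matching_weight M)"

definition meb_radius :: "'a::euclidean_space set \<Rightarrow> real" where
  "meb_radius P = Inf {r. r \<ge> 0 \<and> (\<exists>c. P \<subseteq> cball c r)}"

end

theory Submission
  imports Defs
begin

text \<open>Exchange argument: if \<open>{p, q}\<close> and \<open>{p', q'}\<close> are edges of a maximum-weight matching,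
  then replacing them by \<open>{p, p'}\<close> and \<open>{q, q'}\<close> yields another matching, so
  \<open>\<parallel>p - p'\<parallel> + \<parallel>q - q'\<parallel> \<le> \<parallel>p - q\<parallel> + \<parallel>p' - q'\<parallel>\<close>. If both edges have length at most \<open>r/4\<close>, then \<open>p\<close>
  (and symmetrically \<open>q\<close>) lies within \<open>r/2\<close> of \<open>p'\<close>, so the ball of radius \<open>r/2\<close> around an
  endpoint of any one short edge works. Nothing about the minimum enclosing ball is used.\<close>

lemma is_matching_subset: "is_matching P M \<Longrightarrow> M' \<subseteq> M \<Longrightarrow> is_matching P M'"
  unfolding is_matching_def by (meson subsetD)

lemma is_matching_insert:
  "is_matching P (insert e M) \<longleftrightarrow>
     is_matching P M \<and> e \<subseteq> P \<and> card e = 2 \<and> (\<forall>e'\<in>M. e' \<noteq> e \<longrightarrow> e \<inter> e' = {})"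
  unfolding is_matching_def by (simp add: Int_commute, fast)

lemma finite_matching: "finite P \<Longrightarrow> is_matching P M \<Longrightarrow> finite M"
  unfolding is_matching_def by (meson PowI finite_Pow_iff finite_subset subsetI)

lemma matching_weight_insert:
  fixes p q :: "'a::real_normed_vector"
  assumes "finite M" and "{p, q} \<notin> M"
  shows "matching_weight (insert {p, q} M) = norm (p - q) + matching_weight M"
proof -
  have "(THE w. \<exists>a b. {p, q} = {a, b} \<and> w = norm (a - b)) = norm (p - q)"
    by (rule the_equality) (auto simp: doubleton_eq_iff norm_minus_commute)
  then show ?thesis
    using assms by (simp add: matching_weight_def)
qed

lemma matching_edge: "is_matching P M \<Longrightarrow> e \<in> M \<Longrightarrow> e \<subseteq> P \<and> card e = 2"
  unfolding is_matching_def by simp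

lemma matching_disjoint:
  "is_matching P M \<Longrightarrow> e \<in> M \<Longrightarrow> e' \<in> M \<Longrightarrow> e \<noteq> e' \<Longrightarrow> e \<inter> e' = {}"
  unfolding is_matching_def by simp

lemma matching_edges_distinct:
  assumes "is_matching P M" and "{p, q} \<in> M" and "{p', q'} \<in> M" and "{p, q} \<noteq> {p', q'}"
  shows "distinct [p, q, p', q']"
proof -
  have "card {p, q} = 2" "card {p', q'} = 2" "{p, q} \<inter> {p', q'} = {}"
    using matching_edge[OF assms(1)] matching_disjoint[OF assms] assms(2,3) by simp_all
  then show ?thesis
    by (auto simp: card_2_iff doubleton_eq_iff)
qed

lemma matching_other_edges_disjoint:
  assumes "is_matching P M" and "{p, q} \<in> M" and "{p', q'} \<in> M" and "e \<in> M - {{p, q}, {p', q'}}"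
  shows "e \<inter> {p, q, p', q'} = {}"
proof -
  have "e \<inter> {p, q} = {}" "e \<inter> {p', q'} = {}"
    using matching_disjoint[OF assms(1)] assms(2-4) by auto
  then show ?thesis
    by auto
qed

lemma is_matching_swap:
  assumes M: "is_matching P M" and "{p, q} \<in> M" and "{p', q'} \<in> M" and "{p, q} \<noteq> {p', q'}"
  shows "is_matching P (insert {p, p'} (insert {q, q'} (M - {{p, q}, {p', q'}})))"
proof -
  have "{p, q} \<subseteq> P" "{p', q'} \<subseteq> P"
    using matching_edge[OF M assms(2)] matching_edge[OF M assms(3)] by simp_all
  moreover have "is_matching P (M - {{p, q}, {p', q'}})"
    using M by (rule is_matching_subset) blast
  ultimately show ?thesis
    using matching_edges_distinct[OF assms] matching_other_edges_disjoint[OF assms(1-3)]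
    unfolding is_matching_insert by auto
qed

lemma max_matching_exchange:
  fixes P :: "'a::real_normed_vector set"
  assumes "finite P" and max: "is_max_matching P M"
    and pq: "{p, q} \<in> M" and pq': "{p', q'} \<in> M" and "{p, q} \<noteq> {p', q'}"
  shows "norm (p - p') + norm (q - q') \<le> norm (p - q) + norm (p' - q')"
proof -
  define R where "R = M - {{p, q}, {p', q'}}"
  have M: "is_matching P M"
    using max by (simp add: is_max_matching_def)
  have "finite M"
    using finite_matching[OF assms(1) M] .
  then have fin: "finite R" "finite (insert {q, q'} R)"
    by (simp_all add: R_def)
  have "e \<inter> {p, q, p', q'} = {}" if "e \<in> R" for e
    using matching_other_edges_disjoint[OF M pq pq'] that unfolding R_def .
  then have "{q, q'} \<notin> R" "{p, p'} \<notin> R"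
    by blast+
  moreover have "{p, p'} \<noteq> {q, q'}"
    using matching_edges_distinct[OF M assms(3-5)] by (auto simp: doubleton_eq_iff)
  ultimately have "matching_weight (insert {p, p'} (insert {q, q'} R))
      = norm (p - p') + norm (q - q') + matching_weight R"
    using fin by (simp add: matching_weight_insert)
  moreover have "matching_weight M = norm (p - q) + norm (p' - q') + matching_weight R"
  proof -
    have "M = insert {p, q} (insert {p', q'} R)" "{p', q'} \<notin> R" "{p, q} \<notin> insert {p', q'} R"
      using pq pq' assms(5) by (auto simp: R_def)
    then show ?thesis
      using fin by (simp add: matching_weight_insert)
  qed
  moreover have "matching_weight (insert {p, p'} (insert {q, q'} R)) \<le> matching_weight M"
    using max is_matching_swap[OF M assms(3-5)] by (simp add: is_max_matching_def R_def)
  ultimately show ?thesis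
    by linarith
qed

lemma max_matching_endpoint_dist:
  fixes P :: "'a::real_normed_vector set"
  assumes "finite P" and "is_max_matching P M" and "{p, q} \<in> M" and "{p', q'} \<in> M"
  shows "norm (p - p') \<le> norm (p - q) + norm (p' - q')"
proof (cases "{p, q} = {p', q'}")
  case True
  then show ?thesis
    by (auto simp: doubleton_eq_iff norm_minus_commute)
next
  case False
  then show ?thesis
    using max_matching_exchange[OF assms] norm_ge_zero[of "q - q'"] by linarith
qed

theorem mainTheorem3:
  fixes P :: "'a::euclidean_space set" and M :: "'a set set"
  assumes "finite P"
    and "is_max_matching P M"
  shows "\<exists>c. \<forall>p q. {p, q} \<in> M \<and> norm (p - q) \<le> meb_radius P / 4 \<longrightarrow>
            p \<in> cball c (meb_radius P / 2) \<and> q \<in> cball c (meb_radius P / 2)"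
proof (cases "\<exists>p0 q0. {p0, q0} \<in> M \<and> norm (p0 - q0) \<le> meb_radius P / 4")
  case False
  then show ?thesis by blast
next
  case True
  then obtain p0 q0 where short0: "{p0, q0} \<in> M" "norm (p0 - q0) \<le> meb_radius P / 4"
    by blast
  have close: "dist p0 p \<le> meb_radius P / 2"
    if "{p, q} \<in> M" "norm (p - q) \<le> meb_radius P / 4" for p q
    using max_matching_endpoint_dist[OF assms short0(1) that(1)] that(2) short0(2)
    by (simp add: dist_norm)
  have "p \<in> cball p0 (meb_radius P / 2) \<and> q \<in> cball p0 (meb_radius P / 2)"
    if "{p, q} \<in> M" "norm (p - q) \<le> meb_radius P / 4" for p q
    using close[OF that] close[of q p] that by (simp add: insert_commute norm_minus_commute)
  then show ?thesis by blast
qed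

end
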